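(* Let $m,n\ge 3$ be integers. The direct product $C_m\times C_n$ is a distance magic graph if and only if $n=4$, or $m=4$, or $m\equiv n\equiv 0\pmod 4$. Moreover, $C_m\times C_n$ is a balanced distance magic graph if and only if $n=4$ or $m=4$.
   Context: All graphs are finite and simple; $C_n$ denotes the cycle on $n$ vertices. For a graph $G$ and vertex $x$, $N(x)$ is the (open) neighborhood of $x$. A distance magic labeling of a graph $G$ of order $N$ is a bijection $\ell\colon V(G)\to\{1,\dots,N\}$ for which there is a constant $k$ such that $\sum_{y\in N(x)}\ell(y)=k$ for every $x\in V(G)$; $G$ is distance magic if it admits such a labeling. A balanced distance magic labeling of a graph with an even number $N$ of vertices is a distance magic labeling $\ell$ such that for every vertex $w$: whenever $u\in N(w)$ has $\ell(u)=i$, there is $v\in N(w)$ with $\ell(v)=N+1-i$; a graph is balanced distance magic if it has an even number of vertices and admits such a labeling. The direct product $G\times H$ has vertex set $V(G)\times V(H)$, with $(g,h)$ adjacent to $(g',h')$ iff $gg'\in E(G)$ and $hh'\in E(H)$. *)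

theory Defs
  imports Main
begin

text \<open>A finite simple graph is given by a finite vertex set V and a symmetric,
irreflexive adjacency relation E on V.\<close>

definition nbhd :: "'a set \<Rightarrow> ('a \<Rightarrow> 'a \<Rightarrow> bool) \<Rightarrow> 'a \<Rightarrow> 'a set" where
  "nbhd V E x = {y \<in> V. E x y}"

definition distance_magic_labeling ::
  "'a set \<Rightarrow> ('a \<Rightarrow> 'a \<Rightarrow> bool) \<Rightarrow> ('a \<Rightarrow> nat) \<Rightarrow> bool" where
  "distance_magic_labeling V E l \<longleftrightarrow>
     bij_betw l V {1..card V} \<and>
     (\<exists>k. \<forall>x\<in>V. (\<Sum>y\<in>nbhd V E x. l y) = k)"

definition distance_magic :: "'a set \<Rightarrow> ('a \<Rightarrow> 'a \<Rightarrow> bool) \<Rightarrow> bool" where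
  "distance_magic V E \<longleftrightarrow> (\<exists>l. distance_magic_labeling V E l)"

definition balanced_distance_magic :: "'a set \<Rightarrow> ('a \<Rightarrow> 'a \<Rightarrow> bool) \<Rightarrow> bool" where
  "balanced_distance_magic V E \<longleftrightarrow> even (card V) \<and>
     (\<exists>l. distance_magic_labeling V E l \<and>
        (\<forall>w\<in>V. \<forall>u\<in>nbhd V E w. \<exists>v\<in>nbhd V E w. l v = card V + 1 - l u))"

definition cycle_adj :: "nat \<Rightarrow> nat \<Rightarrow> nat \<Rightarrow> bool" where
  "cycle_adj n i j \<longleftrightarrow> i < n \<and> j < n \<and> i \<noteq> j \<and> (j = (i + 1) mod n \<or> i = (j + 1) mod n)"

definition cycle_verts :: "nat \<Rightarrow> nat set" where
  "cycle_verts n = {0..<n}"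

definition direct_prod_verts :: "'a set \<Rightarrow> 'b set \<Rightarrow> ('a \<times> 'b) set" where
  "direct_prod_verts V W = V \<times> W"

definition direct_prod_adj ::
  "('a \<Rightarrow> 'a \<Rightarrow> bool) \<Rightarrow> ('b \<Rightarrow> 'b \<Rightarrow> bool) \<Rightarrow> 'a \<times> 'b \<Rightarrow> 'a \<times> 'b \<Rightarrow> bool" where
  "direct_prod_adj E F p q \<longleftrightarrow> E (fst p) (fst q) \<and> F (snd p) (snd q)"

end

theory Submission
  imports Defs
begin

(* Write T(m, n) for C_m x C_n.  The neighbourhood of (a, b) is
   {a - 1, a + 1} x {b - 1, b + 1}, a "square" {i, i + 2} x {j, j + 2}, so a
   labeling is distance magic iff it is bijective and all square sums agree.

   It then describes neighbourhoods in T(m, n) and derives: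
   - necessity: if 4 does not divide m, square sums force period 2 in rows and
     period 4 in columns, so injectivity gives n = 4; balance fails unless
     m = 4 or n = 4 by the unique-common-neighbour argument;
   - sufficiency: an explicit antipodal labeling of T(m, 4), which is even
     balanced, and a digit-based labeling of T(4p, 4q) whose opposite rows
     carry complementary labels. *)

lemma bij_betw_of_inj_card:
  assumes "inj_on f A" "f ` A \<subseteq> B" "card A = card B" "finite B"
  shows "bij_betw f A B"
  using assms card_image card_subset_eq unfolding bij_betw_def by metis

lemma nbhd_direct_prod:
  "nbhd (direct_prod_verts V W) (direct_prod_adj E F) (x, y) = nbhd V E x \<times> nbhd W F y"
  unfolding nbhd_def direct_prod_verts_def direct_prod_adj_def by auto

lemma nbhd_iso:
  assumes f: "bij_betw f V W" and adj: "\<forall>x\<in>V. \<forall>y\<in>V. F (f x) (f y) \<longleftrightarrow> E x y"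
    and x: "x \<in> V"
  shows "nbhd W F (f x) = f ` nbhd V E x"
proof -
  have "W = f ` V" using f unfolding bij_betw_def by blast
  then show ?thesis using adj x unfolding nbhd_def by blast
qed

lemma distance_magic_labeling_iso:
  assumes f: "bij_betw f V W" and adj: "\<forall>x\<in>V. \<forall>y\<in>V. F (f x) (f y) \<longleftrightarrow> E x y"
    and l: "distance_magic_labeling W F l"
  shows "distance_magic_labeling V E (l \<circ> f)"
proof -
  obtain k where k: "\<forall>w\<in>W. (\<Sum>y\<in>nbhd W F w. l y) = k"
    using l unfolding distance_magic_labeling_def by blast
  have "(\<Sum>y\<in>nbhd V E x. (l \<circ> f) y) = k" if x: "x \<in> V" for x
  proof -
    have inj: "inj_on f (nbhd V E x)"
      using bij_betw_imp_inj_on[OF f] unfolding nbhd_def by (rule inj_on_subset) blast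
    have "(\<Sum>y\<in>nbhd V E x. (l \<circ> f) y) = (\<Sum>y\<in>f ` nbhd V E x. l y)"
      by (rule sum.reindex[OF inj, symmetric])
    also have "\<dots> = (\<Sum>y\<in>nbhd W F (f x). l y)"
      using nbhd_iso[OF f adj x] by simp
    also have "\<dots> = k" using k bij_betwE[OF f] x by blast
    finally show ?thesis .
  qed
  moreover have "bij_betw (l \<circ> f) V {1..card V}"
  proof -
    have "bij_betw l W {1..card W}" using l unfolding distance_magic_labeling_def by blast
    then show ?thesis using bij_betw_trans[OF f] bij_betw_same_card[OF f] by simp
  qed
  ultimately show ?thesis unfolding distance_magic_labeling_def by blast
qed

lemma balanced_distance_magic_iso:
  assumes f: "bij_betw f V W" and adj: "\<forall>x\<in>V. \<forall>y\<in>V. F (f x) (f y) \<longleftrightarrow> E x y"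
    and bal: "balanced_distance_magic W F"
  shows "balanced_distance_magic V E"
proof -
  have card: "card V = card W" using bij_betw_same_card[OF f] .
  obtain l where l: "distance_magic_labeling W F l"
    and pair: "\<forall>w\<in>W. \<forall>u\<in>nbhd W F w. \<exists>v\<in>nbhd W F w. l v = card W + 1 - l u"
    using bal unfolding balanced_distance_magic_def by blast
  have "\<exists>v\<in>nbhd V E w. (l \<circ> f) v = card V + 1 - (l \<circ> f) u"
    if w: "w \<in> V" and u: "u \<in> nbhd V E w" for w u
  proof -
    note N = nbhd_iso[OF f adj w]
    have "f w \<in> W" using bij_betwE[OF f] w by blast
    moreover have "f u \<in> nbhd W F (f w)" unfolding N using u by blast
    ultimately obtain v' where "v' \<in> nbhd W F (f w)" "l v' = card W + 1 - l (f u)"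
      using pair by blast
    then show ?thesis unfolding N card by auto
  qed
  moreover have "even (card V)" using bal card unfolding balanced_distance_magic_def by simp
  ultimately show ?thesis
    using distance_magic_labeling_iso[OF f adj l]
    unfolding balanced_distance_magic_def by blast
qed

lemma direct_prod_swap_iso:
  shows "bij_betw prod.swap (direct_prod_verts V W) (direct_prod_verts W V)"
    and "\<forall>x\<in>direct_prod_verts V W. \<forall>y\<in>direct_prod_verts V W.
           direct_prod_adj F E (prod.swap x) (prod.swap y) \<longleftrightarrow> direct_prod_adj E F x y"
  unfolding direct_prod_verts_def direct_prod_adj_def bij_betw_def
  by (auto simp: product_swap)

(* Hence (balanced) distance magic products can have their factors swapped;
   this reduces the case m = 4 to the case n = 4. *)
lemma distance_magic_direct_prod_commute:
  assumes "distance_magic (direct_prod_verts W V) (direct_prod_adj F E)"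
  shows "distance_magic (direct_prod_verts V W) (direct_prod_adj E F)"
  using assms distance_magic_labeling_iso[OF direct_prod_swap_iso]
  unfolding distance_magic_def by blast

lemma balanced_distance_magic_direct_prod_commute:
  assumes "balanced_distance_magic (direct_prod_verts W V) (direct_prod_adj F E)"
  shows "balanced_distance_magic (direct_prod_verts V W) (direct_prod_adj E F)"
  using balanced_distance_magic_iso[OF direct_prod_swap_iso assms] .

lemma balanced_imp_distance_magic:
  "balanced_distance_magic V E \<Longrightarrow> distance_magic V E"
  unfolding balanced_distance_magic_def distance_magic_def by blast

(* In a balanced distance magic graph no two vertices have exactly one common
   neighbour u: the partner of u must lie in both neighbourhoods, so it is u
   itself, forcing 2 l(u) = N + 1 with N even. *)
lemma balanced_no_unique_common_neighbour:
  assumes bal: "balanced_distance_magic V E" and w: "w\<^sub>1 \<in> V" "w\<^sub>2 \<in> V"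
    and common: "nbhd V E w\<^sub>1 \<inter> nbhd V E w\<^sub>2 = {u}"
  shows False
proof -
  obtain l where l: "bij_betw l V {1..card V}"
    and pair: "\<forall>w\<in>V. \<forall>u\<in>nbhd V E w. \<exists>v\<in>nbhd V E w. l v = card V + 1 - l u"
    and even: "even (card V)"
    using bal unfolding balanced_distance_magic_def distance_magic_labeling_def by blast
  have sub: "nbhd V E w \<subseteq> V" for w unfolding nbhd_def by blast
  have u: "u \<in> nbhd V E w\<^sub>1" "u \<in> nbhd V E w\<^sub>2" using common by blast+
  obtain v\<^sub>1 where v\<^sub>1: "v\<^sub>1 \<in> nbhd V E w\<^sub>1" "l v\<^sub>1 = card V + 1 - l u"
    using pair w(1) u(1) by blast
  obtain v\<^sub>2 where v\<^sub>2: "v\<^sub>2 \<in> nbhd V E w\<^sub>2" "l v\<^sub>2 = card V + 1 - l u"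
    using pair w(2) u(2) by blast
  have "v\<^sub>1 \<in> V" "v\<^sub>2 \<in> V" using v\<^sub>1(1) v\<^sub>2(1) sub by blast+
  moreover have "l v\<^sub>1 = l v\<^sub>2" using v\<^sub>1(2) v\<^sub>2(2) by simp
  ultimately have "v\<^sub>1 = v\<^sub>2" using inj_onD[OF bij_betw_imp_inj_on[OF l]] by blast
  then have "v\<^sub>1 = u" using v\<^sub>1(1) v\<^sub>2(1) common by blast
  then have "l u = card V + 1 - l u" using v\<^sub>1(2) by simp
  moreover have "l u \<le> card V" using bij_betwE[OF l] u(1) sub by fastforce
  ultimately have "2 * l u = card V + 1" by linarith
  then show False using even by presburger
qed

lemma mod_succ: "(a::nat) < m \<Longrightarrow> (a + 1) mod m = (if a + 1 = m then 0 else a + 1)"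
  by (simp add: Suc_lessI)

lemma mod_pred: "(a::nat) < m \<Longrightarrow> (a + m - 1) mod m = (if a = 0 then m - 1 else a - 1)"
proof (cases a)
  case (Suc b)
  assume "a < m"
  then have "a + m - 1 = b + m" using Suc by simp
  then show ?thesis using Suc \<open>a < m\<close> by simp
qed simp

lemma mod_pred_add_2: "(a::nat) < m \<Longrightarrow> ((a + m - 1) mod m + 2) mod m = (a + 1) mod m"
proof -
  assume "a < m"
  then have "(a + m - 1) + 2 = (a + 1) + m" by simp
  then show ?thesis by (metis mod_add_left_eq mod_add_self2)
qed

lemma cycle_nbhd:
  assumes "3 \<le> m" "a < m"
  shows "nbhd (cycle_verts m) (cycle_adj m) a = {(a + 1) mod m, (a + m - 1) mod m}"
proof -
  have "cycle_adj m a c \<longleftrightarrow> c = (a + 1) mod m \<or> c = (a + m - 1) mod m" if "c < m" for c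
    using assms that unfolding cycle_adj_def
    by (simp only: mod_succ mod_pred) (auto split: if_splits)
  then show ?thesis
    using assms unfolding nbhd_def cycle_verts_def by auto
qed

lemma cycle_succ_ne_pred:
  assumes "3 \<le> m" "(a::nat) < m"
  shows "(a + 1) mod m \<noteq> (a + m - 1) mod m"
  using assms by (simp only: mod_succ mod_pred) (auto split: if_splits)

abbreviation torus_verts :: "nat \<Rightarrow> nat \<Rightarrow> (nat \<times> nat) set" where
  "torus_verts m n \<equiv> direct_prod_verts (cycle_verts m) (cycle_verts n)"

abbreviation torus_adj :: "nat \<Rightarrow> nat \<Rightarrow> nat \<times> nat \<Rightarrow> nat \<times> nat \<Rightarrow> bool" where
  "torus_adj m n \<equiv> direct_prod_adj (cycle_adj m) (cycle_adj n)"

lemma torus_verts_eq: "torus_verts m n = {0..<m} \<times> {0..<n}"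
  unfolding direct_prod_verts_def cycle_verts_def by simp

lemma torus_nbhd:
  assumes "3 \<le> m" "3 \<le> n" "a < m" "b < n"
  shows "nbhd (torus_verts m n) (torus_adj m n) (a, b) =
           {(a + 1) mod m, (a + m - 1) mod m} \<times> {(b + 1) mod n, (b + n - 1) mod n}"
  using assms by (simp add: nbhd_direct_prod cycle_nbhd)

(* The label sum over the four corners {i, i+2} x {j, j+2} of a 2 x 2 square.
   These are exactly the neighbourhoods in C_m x C_n. *)
definition square_sum :: "(nat \<times> nat \<Rightarrow> nat) \<Rightarrow> nat \<Rightarrow> nat \<Rightarrow> nat \<Rightarrow> nat \<Rightarrow> nat" where
  "square_sum l m n i j =
     l (i, j) + l (i, (j + 2) mod n) + l ((i + 2) mod m, j) + l ((i + 2) mod m, (j + 2) mod n)"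

lemma torus_nbhd_sum:
  assumes "3 \<le> m" "3 \<le> n" "a < m" "b < n"
  shows "(\<Sum>y\<in>nbhd (torus_verts m n) (torus_adj m n) (a, b). l y) =
           square_sum l m n ((a + m - 1) mod m) ((b + n - 1) mod n)"
proof -
  define i where "i = (a + m - 1) mod m"
  define j where "j = (b + n - 1) mod n"
  have i: "(i + 2) mod m = (a + 1) mod m" "i \<noteq> (a + 1) mod m"
    using mod_pred_add_2 cycle_succ_ne_pred assms unfolding i_def by metis+
  have j: "(j + 2) mod n = (b + 1) mod n" "j \<noteq> (b + 1) mod n"
    using mod_pred_add_2 cycle_succ_ne_pred assms unfolding j_def by metis+
  have "nbhd (torus_verts m n) (torus_adj m n) (a, b) = {i, (a + 1) mod m} \<times> {j, (b + 1) mod n}"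
    unfolding torus_nbhd[OF assms] i_def j_def by blast
  then show ?thesis
    using i(2) j(2) unfolding i_def[symmetric] j_def[symmetric] square_sum_def i(1) j(1)
    by (simp add: add.assoc)
qed

lemma torus_magic_iff:
  assumes "3 \<le> m" "3 \<le> n"
  shows "distance_magic_labeling (torus_verts m n) (torus_adj m n) l \<longleftrightarrow>
           bij_betw l ({0..<m} \<times> {0..<n}) {1..m * n} \<and>
           (\<exists>k. \<forall>i<m. \<forall>j<n. square_sum l m n i j = k)"
proof -
  have pred_range: "(a + m - 1) mod m < m" "(b + n - 1) mod n < n" for a b
    using assms by simp_all
  have pred_succ: "((i + 1) mod m + m - 1) mod m = i" "((j + 1) mod n + n - 1) mod n = j"
    if "i < m" "j < n" for i j
    using that by (simp_all only: mod_succ mod_pred) (auto split: if_splits)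
  have "(\<forall>x\<in>torus_verts m n. (\<Sum>y\<in>nbhd (torus_verts m n) (torus_adj m n) x. l y) = k) \<longleftrightarrow>
        (\<forall>i<m. \<forall>j<n. square_sum l m n i j = k)" for k
  proof
    assume sums: "\<forall>x\<in>torus_verts m n. (\<Sum>y\<in>nbhd (torus_verts m n) (torus_adj m n) x. l y) = k"
    show "\<forall>i<m. \<forall>j<n. square_sum l m n i j = k"
    proof (intro allI impI)
      fix i j assume "i < m" "j < n"
      have "(i + 1) mod m < m" "(j + 1) mod n < n" using assms by simp_all
      then have "((i + 1) mod m, (j + 1) mod n) \<in> torus_verts m n"
        unfolding torus_verts_eq by simp
      then have "(\<Sum>y\<in>nbhd (torus_verts m n) (torus_adj m n) ((i + 1) mod m, (j + 1) mod n). l y) = k"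
        using sums by blast
      then show "square_sum l m n i j = k"
        unfolding torus_nbhd_sum[OF assms \<open>(i + 1) mod m < m\<close> \<open>(j + 1) mod n < n\<close>]
          pred_succ[OF \<open>i < m\<close> \<open>j < n\<close>] .
    qed
  next
    assume "\<forall>i<m. \<forall>j<n. square_sum l m n i j = k"
    then show "\<forall>x\<in>torus_verts m n. (\<Sum>y\<in>nbhd (torus_verts m n) (torus_adj m n) x. l y) = k"
      using torus_nbhd_sum[OF assms] pred_range unfolding torus_verts_eq by auto
  qed
  moreover have "card (torus_verts m n) = m * n" unfolding torus_verts_eq by simp
  ultimately show ?thesis
    unfolding distance_magic_labeling_def torus_verts_eq by simp
qed

(* If phi(i) + phi(i + 2) is constant on Z_M then phi has period 4; if moreover
   4 does not divide M, shifting by 4 eventually shifts by 2, so phi has period 2. *)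
lemma alternating_sum_period_4:
  fixes \<phi> :: "nat \<Rightarrow> 'a::cancel_ab_semigroup_add"
  assumes "0 < M" and sums: "\<forall>i<M. \<phi> i + \<phi> ((i + 2) mod M) = c" and "i < M"
  shows "\<phi> ((i + 4 * t) mod M) = \<phi> i"
proof (induction t)
  case 0
  show ?case using \<open>i < M\<close> by simp
next
  case (Suc t)
  define i' where "i' = (i + 4 * t) mod M"
  define i'' where "i'' = (i' + 2) mod M"
  have "i' < M" "i'' < M" unfolding i'_def i''_def using \<open>0 < M\<close> by simp_all
  then have "\<phi> i'' + \<phi> i' = \<phi> i'' + \<phi> ((i'' + 2) mod M)"
    using sums unfolding i''_def by (metis add.commute)
  then have "\<phi> ((i'' + 2) mod M) = \<phi> i'" by simp
  moreover have "(i'' + 2) mod M = (i + 4 * Suc t) mod M"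
  proof -
    have "(i'' + 2) mod M = (i' + 2 + 2) mod M" unfolding i''_def by (rule mod_add_left_eq)
    also have "i' + 2 + 2 = i' + 4" by simp
    also have "(i' + 4) mod M = (i + 4 * t + 4) mod M" unfolding i'_def by (rule mod_add_left_eq)
    also have "i + 4 * t + 4 = i + 4 * Suc t" by simp
    finally show ?thesis .
  qed
  ultimately show ?case using Suc.IH unfolding i'_def by simp
qed

lemma shift_4_reaches_shift_2:
  assumes "(M::nat) mod 4 \<noteq> 0"
  shows "\<exists>t. (i + 4 * t) mod M = (i + 2) mod M"
proof (cases "odd M")
  case True
  then have "4 * ((M + 1) div 2) = 2 + M * 2" by presburger
  then have "(i + 4 * ((M + 1) div 2)) mod M = (i + 2) mod M" by (metis add.assoc mod_mult_self2)
  then show ?thesis by blast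
next
  case False
  then have "4 * ((M + 2) div 4) = 2 + M * 1" using assms by presburger
  then have "(i + 4 * ((M + 2) div 4)) mod M = (i + 2) mod M" by (metis add.assoc mod_mult_self2)
  then show ?thesis by blast
qed

lemma alternating_sum_period_2:
  fixes \<phi> :: "nat \<Rightarrow> 'a::cancel_ab_semigroup_add"
  assumes "0 < M" "\<forall>i<M. \<phi> i + \<phi> ((i + 2) mod M) = c" "i < M" "M mod 4 \<noteq> 0"
  shows "\<phi> ((i + 2) mod M) = \<phi> i"
  using alternating_sum_period_4[OF assms(1-3)] shift_4_reaches_shift_2[OF assms(4)] by metis

(* Necessity: if 4 does not divide m, a magic labeling of C_m x C_n forces n = 4.
   Column pairs l(i,j) + l(i,j+2) satisfy the alternating relation in i with
   period 2, hence all equal k/2; then j |-> l(0,j) has period 4, which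
   contradicts injectivity unless n = 4. *)
lemma torus_magic_forces_4:
  assumes "3 \<le> m" "3 \<le> n" "m mod 4 \<noteq> 0"
    and inj: "inj_on l ({0..<m} \<times> {0..<n})"
    and squares: "\<forall>i<m. \<forall>j<n. square_sum l m n i j = k"
  shows "n = 4"
proof (rule ccontr)
  assume "n \<noteq> 4"
  have column_pairs: "l (0, j) + l (0, (j + 2) mod n) = k div 2" if "j < n" for j
  proof -
    define \<phi> where "\<phi> i = l (i, j) + l (i, (j + 2) mod n)" for i
    have sums: "\<forall>i<m. \<phi> i + \<phi> ((i + 2) mod m) = k"
      using squares \<open>j < n\<close> unfolding \<phi>_def square_sum_def by (simp add: add.assoc)
    have "\<phi> ((0 + 2) mod m) = \<phi> 0"
      by (rule alternating_sum_period_2[OF _ sums]) (use assms in auto)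
    then have "\<phi> 0 + \<phi> 0 = k" using sums assms(1) by fastforce
    then show ?thesis unfolding \<phi>_def by linarith
  qed
  have "l (0, (0 + 4 * 1) mod n) = l (0, 0)"
    using alternating_sum_period_4[of n "\<lambda>j. l (0, j)" "k div 2" 0 1] column_pairs assms(2) by simp
  moreover have "4 mod n \<noteq> 0" "4 mod n < n"
    using assms(2) \<open>n \<noteq> 4\<close> by (cases "n = 3"; simp)+
  ultimately show False
    using inj_onD[OF inj, of "(0, 4 mod n)" "(0, 0)"] assms(1,2) by simp
qed

lemma torus_distance_magic_forces_4:
  assumes "3 \<le> m" "3 \<le> n" "m mod 4 \<noteq> 0"
    and "distance_magic (torus_verts m n) (torus_adj m n)"
  shows "n = 4"
proof -
  obtain l k where "bij_betw l ({0..<m} \<times> {0..<n}) {1..m * n}"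
    and squares: "\<forall>i<m. \<forall>j<n. square_sum l m n i j = k"
    using assms(4) torus_magic_iff[OF assms(1,2)] unfolding distance_magic_def by blast
  then show ?thesis
    using torus_magic_forces_4[OF assms(1-3) _ squares] bij_betw_imp_inj_on by blast
qed

(* Necessity for balance: unless m = 4 or n = 4, the vertices (1, 1) and
   (m - 1, n - 1) have the single common neighbour (0, 0). *)
lemma balanced_torus_forces_4:
  assumes "3 \<le> m" "3 \<le> n" and bal: "balanced_distance_magic (torus_verts m n) (torus_adj m n)"
  shows "m = 4 \<or> n = 4"
proof (rule ccontr)
  assume "\<not> (m = 4 \<or> n = 4)"
  have m: "(1 + 1) mod m = 2" "(1 + m - 1) mod m = 0" "(m - 1 + 1) mod m = 0" "(m - 1 + m - 1) mod m = m - 2"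
    and n: "(1 + 1) mod n = 2" "(1 + n - 1) mod n = 0" "(n - 1 + 1) mod n = 0" "(n - 1 + n - 1) mod n = n - 2"
    using assms(1,2) mod_pred[of "m - 1" m] mod_pred[of "n - 1" n] by simp_all
  have "nbhd (torus_verts m n) (torus_adj m n) (1, 1) = {2, 0} \<times> {2, 0}"
    using torus_nbhd[of m n 1 1] assms(1,2) unfolding m n by simp
  moreover have "nbhd (torus_verts m n) (torus_adj m n) (m - 1, n - 1) = {0, m - 2} \<times> {0, n - 2}"
    using torus_nbhd[of m n "m - 1" "n - 1"] assms(1,2) unfolding m n by simp
  ultimately have "nbhd (torus_verts m n) (torus_adj m n) (1, 1) \<inter>
                   nbhd (torus_verts m n) (torus_adj m n) (m - 1, n - 1) = {(0, 0)}"
    using \<open>\<not> (m = 4 \<or> n = 4)\<close> assms(1,2) by auto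
  moreover have "(1, 1) \<in> torus_verts m n" "(m - 1, n - 1) \<in> torus_verts m n"
    using assms(1,2) unfolding torus_verts_eq by auto
  ultimately show False using balanced_no_unique_common_neighbour[OF bal] by blast
qed

lemma mixed_radix_unique:
  fixes r s r' s' T :: nat
  assumes "s < T" "s' < T" "r * T + s = r' * T + s'"
  shows "r = r' \<and> s = s'"
proof -
  have "(r * T + s) div T = r" "(r * T + s) mod T = s" using assms(1) by simp_all
  moreover have "(r' * T + s') div T = r'" "(r' * T + s') mod T = s'" using assms(2) by simp_all
  ultimately show ?thesis using assms(3) by metis
qed

lemma three_bits_unique:
  fixes x y z x' y' z' :: nat
  assumes "x < 2" "y < 2" "z < 2" "x' < 2" "y' < 2" "z' < 2"
    and "4 * x + 2 * y + z = 4 * x' + 2 * y' + z'"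
  shows "x = x' \<and> y = y' \<and> z = z'"
proof -
  have "(x * 2 + y) * 2 + z = (x' * 2 + y') * 2 + z'" using assms(7) by simp
  then have "x * 2 + y = x' * 2 + y' \<and> z = z'" using mixed_radix_unique assms(3,6) by blast
  then show ?thesis using mixed_radix_unique assms(2,5) by blast
qed

(* Sufficiency for n = 4: antipodal vertices j and j + 2 of C_4 are the two
   second coordinates of every neighbourhood, so a bijective labeling with
   l(i, j) + l(i, j + 2) = 4m + 1 is balanced distance magic. *)
lemma torus_4_balanced_of_antipodal:
  fixes l :: "nat \<times> nat \<Rightarrow> nat"
  assumes "3 \<le> m" and bij: "bij_betw l ({0..<m} \<times> {0..<4}) {1..4 * m}"
    and antipodal: "\<forall>i<m. \<forall>j<4. l (i, j) + l (i, (j + 2) mod 4) = 4 * m + 1"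
  shows "balanced_distance_magic (torus_verts m 4) (torus_adj m 4)"
proof -
  have "square_sum l m 4 i j = 2 * (4 * m + 1)" if "i < m" "j < 4" for i j
    using antipodal that assms(1) unfolding square_sum_def by fastforce
  then have magic: "distance_magic_labeling (torus_verts m 4) (torus_adj m 4) l"
    using torus_magic_iff[of m 4] assms(1) bij by (auto simp: mult.commute)
  have "\<exists>v\<in>nbhd (torus_verts m 4) (torus_adj m 4) w. l v = card (torus_verts m 4) + 1 - l u"
    if w: "w \<in> torus_verts m 4" and u: "u \<in> nbhd (torus_verts m 4) (torus_adj m 4) w" for w u
  proof -
    obtain a b where ab: "w = (a, b)" "a < m" "b < 4" using w unfolding torus_verts_eq by auto
    note N = torus_nbhd[of m 4 a b, OF assms(1) _ ab(2,3), simplified]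
    obtain c d where cd: "u = (c, d)" "c \<in> {(a + 1) mod m, (a + m - 1) mod m}"
      "d \<in> {(b + 1) mod 4, (b + 4 - 1) mod 4}"
      using u unfolding ab N by auto
    have "(d + 2) mod 4 \<in> {(b + 1) mod 4, (b + 4 - 1) mod 4}"
    proof -
      have "b \<in> {0, 1, 2, 3}" using \<open>b < 4\<close> by auto
      then show ?thesis using cd(3) by auto
    qed
    then have partner: "(c, (d + 2) mod 4) \<in> nbhd (torus_verts m 4) (torus_adj m 4) w"
      using cd(2) unfolding ab N by auto
    have "c < m" "d < 4" using cd(2,3) assms(1) by auto
    then have "l (c, d) + l (c, (d + 2) mod 4) = 4 * m + 1" using antipodal by blast
    then have "l (c, (d + 2) mod 4) = card (torus_verts m 4) + 1 - l u"
      unfolding cd(1) torus_verts_eq by simp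
    with partner show ?thesis by blast
  qed
  then show ?thesis
    using magic unfolding balanced_distance_magic_def torus_verts_eq by auto
qed

definition antipodal_label :: "nat \<Rightarrow> nat \<times> nat \<Rightarrow> nat" where
  "antipodal_label m x = (case x of (i, j) \<Rightarrow>
     if j < 2 then i * 2 + j + 1 else 4 * m - (i * 2 + (j - 2)))"

lemma antipodal_label_bij:
  "bij_betw (antipodal_label m) ({0..<m} \<times> {0..<4}) {1..4 * m}"
proof (rule bij_betw_of_inj_card)
  show "inj_on (antipodal_label m) ({0..<m} \<times> {0..<4})"
  proof (rule inj_onI)
    fix x x' assume "x \<in> {0..<m} \<times> {0..<4}" "x' \<in> {0..<m} \<times> {0..<4}"
      and "antipodal_label m x = antipodal_label m x'"
    then obtain i j i' j' where x: "x = (i, j)" "x' = (i', j')"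
      and bounds: "i < m" "j < 4" "i' < m" "j' < 4"
      and eq: "antipodal_label m (i, j) = antipodal_label m (i', j')" by auto
    consider "j < 2" "j' < 2" | "2 \<le> j" "2 \<le> j'" | "j < 2 \<longleftrightarrow> \<not> j' < 2" by linarith
    then have "i = i' \<and> j = j'"
    proof cases
      case 1
      then show ?thesis using eq mixed_radix_unique[of j 2 j' i i'] unfolding antipodal_label_def by simp
    next
      case 2
      then have "i * 2 + (j - 2) = i' * 2 + (j' - 2)"
        using eq bounds unfolding antipodal_label_def by auto
      then show ?thesis using 2 bounds mixed_radix_unique[of "j - 2" 2 "j' - 2" i i'] by auto
    next
      case 3
      then show ?thesis using eq bounds unfolding antipodal_label_def by (auto split: if_splits)
    qed
    then show "x = x'" using x by simp
  qed
  show "antipodal_label m ` ({0..<m} \<times> {0..<4}) \<subseteq> {1..4 * m}"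
    unfolding antipodal_label_def by auto
qed simp_all

lemma antipodal_label_antipodal:
  "\<forall>i<m. \<forall>j<4. antipodal_label m (i, j) + antipodal_label m (i, (j + 2) mod 4) = 4 * m + 1"
proof (intro allI impI)
  fix i j :: nat assume "i < m" "j < 4"
  then have "j \<in> {0, 1, 2, 3}" by auto
  then show "antipodal_label m (i, j) + antipodal_label m (i, (j + 2) mod 4) = 4 * m + 1"
    using \<open>i < m\<close> unfolding antipodal_label_def by auto
qed

lemma torus_4_balanced:
  assumes "3 \<le> m"
  shows "balanced_distance_magic (torus_verts m 4) (torus_adj m 4)"
  using torus_4_balanced_of_antipodal[OF assms antipodal_label_bij antipodal_label_antipodal] .

lemma square_sum_complementary_rows:
  fixes l :: "nat \<times> nat \<Rightarrow> nat" and z :: "nat \<Rightarrow> nat \<Rightarrow> nat"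
  assumes "a < M" "b < N"
    and label: "\<forall>x<M. \<forall>y<N. l (x, y) = (if s x then C + 1 + z x y else C - z x y)"
    and bound: "\<forall>x<M. \<forall>y<N. z x y \<le> C"
    and flip: "s ((a + 2) mod M) \<longleftrightarrow> \<not> s a"
    and balance: "z a b + z a ((b + 2) mod N) =
                  z ((a + 2) mod M) b + z ((a + 2) mod M) ((b + 2) mod N)"
  shows "square_sum l M N a b = 2 * (2 * C + 1)"
proof -
  define a' where "a' = (a + 2) mod M"
  define b' where "b' = (b + 2) mod N"
  have "a' < M" "b' < N" using \<open>a < M\<close> \<open>b < N\<close> unfolding a'_def b'_def by simp_all
  then have rows: "l (a, y) = (if s a then C + 1 + z a y else C - z a y)"
      "l (a', y) = (if s a then C - z a' y else C + 1 + z a' y)"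
      "z a y \<le> C" "z a' y \<le> C" if "y \<in> {b, b'}" for y
    using assms that unfolding a'_def by auto
  show ?thesis
    using balance rows[of b] rows[of b']
    unfolding square_sum_def a'_def[symmetric] b'_def[symmetric] by (cases "s a") simp_all
qed

definition quarter :: "nat \<Rightarrow> nat" where
  "quarter a = a div 4"

definition phase :: "nat \<Rightarrow> nat" where
  "phase a = a div 2 mod 2"

lemma quarter_phase_parity: "a = 4 * quarter a + 2 * phase a + a mod 2"
proof -
  have "a div 4 = a div 2 div 2" using div_mult2_eq[of a 2 2] by simp
  then show ?thesis
    using div_mult_mod_eq[of a 2] div_mult_mod_eq[of "a div 2" 2]
    unfolding quarter_def phase_def by linarith
qed

lemma phase_le_1: "phase a \<le> 1"
  unfolding phase_def by simp

lemma quarter_less: "a < 4 * p \<Longrightarrow> quarter a < p"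
  unfolding quarter_def by simp

lemma shift_2_mod_4p:
  assumes "a < 4 * p"
  shows "(a + 2) mod (4 * p) mod 2 = a mod 2 \<and> phase ((a + 2) mod (4 * p)) = 1 - phase a"
proof (cases "a + 2 < 4 * p")
  case True
  then show ?thesis unfolding phase_def by simp presburger
next
  case False
  obtain k where p: "p = Suc k" using assms by (cases p) auto
  define r where "r = a + 2 - 4 * p"
  have r: "r < 2" "a = r + 2 * (2 * k + 1)" "a + 2 = r + 4 * p"
    using assms False unfolding r_def p by auto
  have "(a + 2) mod (4 * p) = r mod (4 * p)" unfolding r(3) by simp
  also have "\<dots> = r" using r(1) p by simp
  finally have "(a + 2) mod (4 * p) = r" .
  moreover have "a mod 2 = r" "a div 2 mod 2 = 1" using r(1) unfolding r(2) by presburger+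
  ultimately show ?thesis unfolding phase_def using r by simp
qed

definition torus_offset :: "nat \<Rightarrow> nat \<Rightarrow> nat \<Rightarrow> nat \<Rightarrow> nat" where
  "torus_offset p q a b =
     (4 * (a mod 2) + 2 * (b mod 2) + phase b) * (p * q) +
     (quarter b * p + (if phase b = 0 then quarter a else p - 1 - quarter a))"

definition torus_label :: "nat \<Rightarrow> nat \<Rightarrow> nat \<times> nat \<Rightarrow> nat" where
  "torus_label p q x = (case x of (a, b) \<Rightarrow>
     if phase a = 0 then 8 * p * q + 1 + torus_offset p q a b else 8 * p * q - torus_offset p q a b)"

(* The lower part of the offset is a two-digit base-p number below pq, and the
   leading digit is at most 7, so offsets are below 8pq. *)
lemma torus_offset_low_less:
  assumes "a < 4 * p" "b < 4 * q"
  shows "quarter b * p + (if phase b = 0 then quarter a else p - 1 - quarter a) < p * q"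
proof -
  have "quarter a < p" "quarter b < q" using assms quarter_less by blast+
  moreover have "(quarter b + 1) * p \<le> q * p"
    using mult_le_mono1[of "quarter b + 1" q p] \<open>quarter b < q\<close> by simp
  ultimately show ?thesis by (auto simp: algebra_simps)
qed

lemma torus_offset_less:
  assumes "a < 4 * p" "b < 4 * q"
  shows "torus_offset p q a b < 8 * p * q"
proof -
  have "4 * (a mod 2) + 2 * (b mod 2) + phase b \<le> 7" using phase_le_1[of b] by linarith
  then have "(4 * (a mod 2) + 2 * (b mod 2) + phase b) * (p * q) \<le> 7 * (p * q)" by simp
  then show ?thesis using torus_offset_low_less[OF assms] unfolding torus_offset_def by linarith
qed

(* The reflection makes quarter a cancel in column-pair sums, which therefore
   depend on the row x only through its parity. *)
lemma torus_offset_column_pair: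
  assumes "x < 4 * p" "b < 4 * q"
  shows "torus_offset p q x b + torus_offset p q x ((b + 2) mod (4 * q)) =
           (8 * (x mod 2) + 4 * (b mod 2) + 1) * (p * q) +
           (quarter b + quarter ((b + 2) mod (4 * q))) * p + (p - 1)"
proof -
  have "quarter x < p" using assms quarter_less by blast
  moreover have "(b + 2) mod (4 * q) mod 2 = b mod 2 \<and> phase ((b + 2) mod (4 * q)) = 1 - phase b"
    using shift_2_mod_4p[OF assms(2)] .
  moreover have "phase b = 0 \<or> phase b = 1" using phase_le_1[of b] by arith
  ultimately show ?thesis
    unfolding torus_offset_def by (elim disjE) (auto simp: algebra_simps)
qed

lemma torus_offset_balance:
  assumes "a < 4 * p" "b < 4 * q"
  shows "torus_offset p q a b + torus_offset p q a ((b + 2) mod (4 * q)) =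
         torus_offset p q ((a + 2) mod (4 * p)) b +
         torus_offset p q ((a + 2) mod (4 * p)) ((b + 2) mod (4 * q))"
proof -
  have "(a + 2) mod (4 * p) < 4 * p" using assms by simp
  then show ?thesis
    using torus_offset_column_pair[OF assms] torus_offset_column_pair[of "(a + 2) mod (4 * p)" p b q]
      shift_2_mod_4p[OF assms(1)] assms(2) by simp
qed

(* The offset determines b and the parity and quarter of a; the phase of a is
   recovered from the label, so the labeling is injective. *)
lemma torus_offset_determines:
  assumes "a < 4 * p" "b < 4 * q" "c < 4 * p" "d < 4 * q"
    and eq: "torus_offset p q a b = torus_offset p q c d"
  shows "a mod 2 = c mod 2 \<and> quarter a = quarter c \<and> b = d"
proof -
  define low where "low x y = (if phase y = 0 then quarter x else p - 1 - quarter x)" for x y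
  have qa: "quarter a < p" "quarter c < p" using assms quarter_less by blast+
  have "4 * (a mod 2) + 2 * (b mod 2) + phase b = 4 * (c mod 2) + 2 * (d mod 2) + phase d"
    and low_eq: "quarter b * p + low a b = quarter d * p + low c d"
    using mixed_radix_unique[OF torus_offset_low_less[OF assms(1,2)] torus_offset_low_less[OF assms(3,4)]
        eq[unfolded torus_offset_def]]
    unfolding low_def by blast+
  moreover have "a mod 2 < 2" "b mod 2 < 2" "phase b < 2" "c mod 2 < 2" "d mod 2 < 2" "phase d < 2"
    using phase_le_1[of b] phase_le_1[of d] by simp_all
  ultimately have parity: "a mod 2 = c mod 2" "b mod 2 = d mod 2" and "phase b = phase d"
    using three_bits_unique by blast+
  moreover have "low a b < p" "low c d < p" using qa unfolding low_def by auto
  then have "quarter b = quarter d" "low a b = low c d"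
    using mixed_radix_unique[OF _ _ low_eq] by blast+
  moreover have "quarter a = quarter c"
    using \<open>low a b = low c d\<close> \<open>phase b = phase d\<close> qa unfolding low_def by (auto split: if_splits)
  ultimately show ?thesis using quarter_phase_parity[of b] quarter_phase_parity[of d] by metis
qed

lemma torus_label_inj: "inj_on (torus_label p q) ({0..<4 * p} \<times> {0..<4 * q})"
proof (rule inj_onI)
  fix x x' assume "x \<in> {0..<4 * p} \<times> {0..<4 * q}" "x' \<in> {0..<4 * p} \<times> {0..<4 * q}"
    and eq: "torus_label p q x = torus_label p q x'"
  then obtain a b c d where x: "x = (a, b)" "x' = (c, d)"
    and bounds: "a < 4 * p" "b < 4 * q" "c < 4 * p" "d < 4 * q" by auto
  have "torus_offset p q a b < 8 * p * q" "torus_offset p q c d < 8 * p * q"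
    using torus_offset_less bounds by blast+
  then have "phase a = phase c" "torus_offset p q a b = torus_offset p q c d"
    using eq phase_le_1[of a] phase_le_1[of c] unfolding x torus_label_def by (auto split: if_splits)
  then show "x = x'"
    using torus_offset_determines[OF bounds] quarter_phase_parity[of a] quarter_phase_parity[of c]
    unfolding x by metis
qed

(* Labels of phase-0 rows lie in (8pq, 16pq], those of phase-1 rows in [1, 8pq]. *)
lemma torus_label_range:
  "torus_label p q ` ({0..<4 * p} \<times> {0..<4 * q}) \<subseteq> {1..(4 * p) * (4 * q)}"
proof (rule image_subsetI)
  fix x assume "x \<in> {0..<4 * p} \<times> {0..<4 * q}"
  then obtain a b where x: "x = (a, b)" and bounds: "a < 4 * p" "b < 4 * q" by auto
  then have "torus_offset p q a b < 8 * p * q" by (intro torus_offset_less)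
  then show "torus_label p q x \<in> {1..(4 * p) * (4 * q)}"
    unfolding x torus_label_def by auto
qed

lemma torus_label_bij:
  "bij_betw (torus_label p q) ({0..<4 * p} \<times> {0..<4 * q}) {1..(4 * p) * (4 * q)}"
  by (rule bij_betw_of_inj_card[OF torus_label_inj torus_label_range]) simp_all

(* All square sums equal 2(16pq + 1), since rows a and a + 2 have opposite phases. *)
lemma torus_label_square_sum:
  assumes "a < 4 * p" "b < 4 * q"
  shows "square_sum (torus_label p q) (4 * p) (4 * q) a b = 2 * (2 * (8 * p * q) + 1)"
proof (rule square_sum_complementary_rows[OF assms])
  show "\<forall>x<4 * p. \<forall>y<4 * q. torus_label p q (x, y) =
     (if phase x = 0 then 8 * p * q + 1 + torus_offset p q x y else 8 * p * q - torus_offset p q x y)"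
    unfolding torus_label_def by simp
  show "\<forall>x<4 * p. \<forall>y<4 * q. torus_offset p q x y \<le> 8 * p * q"
    using torus_offset_less by (blast intro: less_imp_le)
  show "phase ((a + 2) mod (4 * p)) = 0 \<longleftrightarrow> \<not> phase a = 0"
    using shift_2_mod_4p[OF assms(1)] phase_le_1[of a] by auto
qed (rule torus_offset_balance[OF assms])

lemma torus_4p_4q_magic:
  assumes "0 < p" "0 < q"
  shows "distance_magic (torus_verts (4 * p) (4 * q)) (torus_adj (4 * p) (4 * q))"
proof -
  have "3 \<le> 4 * p" "3 \<le> 4 * q" using assms by simp_all
  then have "distance_magic_labeling (torus_verts (4 * p) (4 * q)) (torus_adj (4 * p) (4 * q))
               (torus_label p q)"
    using torus_magic_iff torus_label_bij torus_label_square_sum by blast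
  then show ?thesis unfolding distance_magic_def by blast
qed

theorem mainTheorem11:
  fixes m n :: nat
  assumes "m \<ge> 3" and "n \<ge> 3"
  shows "(distance_magic
            (direct_prod_verts (cycle_verts m) (cycle_verts n))
            (direct_prod_adj (cycle_adj m) (cycle_adj n))
          \<longleftrightarrow> n = 4 \<or> m = 4 \<or> (m mod 4 = 0 \<and> n mod 4 = 0))
       \<and> (balanced_distance_magic
            (direct_prod_verts (cycle_verts m) (cycle_verts n))
            (direct_prod_adj (cycle_adj m) (cycle_adj n))
          \<longleftrightarrow> n = 4 \<or> m = 4)"
proof -
  have balanced_if_4: "balanced_distance_magic (torus_verts m n) (torus_adj m n)" if "n = 4 \<or> m = 4"
    using that torus_4_balanced assms balanced_distance_magic_direct_prod_commute by blast
  have magic_if_both_mod_4: "distance_magic (torus_verts m n) (torus_adj m n)"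
    if "m mod 4 = 0" "n mod 4 = 0"
  proof -
    have "m = 4 * (m div 4)" "n = 4 * (n div 4)" "0 < m div 4" "0 < n div 4"
      using that assms by auto
    then show ?thesis using torus_4p_4q_magic by metis
  qed
  have magic_only_if: "n = 4 \<or> m = 4 \<or> (m mod 4 = 0 \<and> n mod 4 = 0)"
    if "distance_magic (torus_verts m n) (torus_adj m n)"
    using that torus_distance_magic_forces_4[OF assms]
      torus_distance_magic_forces_4[OF assms(2,1)] distance_magic_direct_prod_commute by blast
  have balanced_only_if: "n = 4 \<or> m = 4" if "balanced_distance_magic (torus_verts m n) (torus_adj m n)"
    using balanced_torus_forces_4[OF assms that] by blast
  show ?thesis
    using balanced_if_4 magic_if_both_mod_4 magic_only_if balanced_only_if
      balanced_imp_distance_magic[of "torus_verts m n" "torus_adj m n"] by meson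
qed

end
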